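(* Let $z_1,z_2,z_3\in\mathbb{C}$ be such that $0<|z_1|\le |z_2|\le |z_3|$. Then \[ |z_1+z_2+z_3| + \left(3-\left|\frac{z_1}{|z_1|}+\frac{z_2}{|z_2|}+\frac{z_3}{|z_3|}\right|\right)|z_1| \le |z_1|+|z_2|+|z_3|. \] *)

theory Defs
  imports Complex_Main
begin

end

theory Submission
  imports Defs
begin

text \<open>The inequality holds for any finite family of vectors in a normed space and any lower
  bound \<open>m \<ge> 0\<close> of their norms; here \<open>m = cmod z1\<close>.  Split each vector as
  \<open>f k = (norm (f k) - m) *\<^sub>R sgn (f k) + m *\<^sub>R sgn (f k)\<close>: the triangle inequality bounds
  the first parts by \<open>norm (f k) - m\<close> each, while the second parts are kept together as
  \<open>m *\<^sub>R (\<Sum>k\<in>A. sgn (f k))\<close>.\<close>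

lemma norm_scaleR_norm_sgn: "norm x *\<^sub>R sgn x = x"
  by (cases "x = 0") (simp_all add: sgn_div_norm)

lemma norm_sum_plus_min_norm_le:
  fixes f :: "'i \<Rightarrow> 'a::real_normed_vector"
  assumes "finite A" and "0 \<le> m" and "\<And>k. k \<in> A \<Longrightarrow> m \<le> norm (f k)"
  shows "norm (\<Sum>k\<in>A. f k) + (card A - norm (\<Sum>k\<in>A. sgn (f k))) * m \<le> (\<Sum>k\<in>A. norm (f k))"
proof -
  have decomposition: "(\<Sum>k\<in>A. f k) = (\<Sum>k\<in>A. (norm (f k) - m) *\<^sub>R sgn (f k)) + m *\<^sub>R (\<Sum>k\<in>A. sgn (f k))"
    by (simp add: scaleR_sum_right sum.distrib[symmetric] scaleR_left_diff_distrib norm_scaleR_norm_sgn)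
  have "norm ((norm (f k) - m) *\<^sub>R sgn (f k)) \<le> norm (f k) - m" if "k \<in> A" for k
    using assms(3)[OF that] by (cases "f k = 0") (simp_all add: norm_sgn)
  then have "norm (\<Sum>k\<in>A. (norm (f k) - m) *\<^sub>R sgn (f k)) \<le> (\<Sum>k\<in>A. norm (f k) - m)"
    by (rule sum_norm_le)
  moreover have "norm (m *\<^sub>R (\<Sum>k\<in>A. sgn (f k))) = m * norm (\<Sum>k\<in>A. sgn (f k))"
    using assms(2) by simp
  ultimately have "norm (\<Sum>k\<in>A. f k) \<le> (\<Sum>k\<in>A. norm (f k) - m) + m * norm (\<Sum>k\<in>A. sgn (f k))"
    unfolding decomposition by (intro norm_triangle_le) linarith
  then show ?thesis
    by (simp add: sum_subtractf algebra_simps)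
qed

theorem mainTheorem2:
  fixes z1 z2 z3 :: complex
  assumes "0 < cmod z1" and "cmod z1 \<le> cmod z2" and "cmod z2 \<le> cmod z3"
  shows "cmod (z1 + z2 + z3)
           + (3 - cmod (z1 / of_real (cmod z1) + z2 / of_real (cmod z2) + z3 / of_real (cmod z3))) * cmod z1
         \<le> cmod z1 + cmod z2 + cmod z3"
proof -
  define z where "z = (\<lambda>k::nat. if k = 0 then z1 else if k = 1 then z2 else z3)"
  have "norm (\<Sum>k\<in>{0,1,2}. z k) + (card {0,1,2::nat} - norm (\<Sum>k\<in>{0,1,2}. sgn (z k))) * cmod z1
      \<le> (\<Sum>k\<in>{0,1,2}. norm (z k))"
    by (rule norm_sum_plus_min_norm_le) (use assms in \<open>auto simp: z_def\<close>)
  then show ?thesis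
    by (simp add: z_def sgn_eq add.assoc)
qed

end
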